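(* Let $G$ be a group with finite generating set $S$ (with $S=S^{-1}$, $e\notin S$). For $n\ge 3$ let $\sigma=(1\,2\,\cdots\,n)\in\mathrm{Sym}(n)$ and $S_{\rm pos}=\mathrm{Sym}(n)\smallsetminus\{e,\sigma,\sigma^{-1}\}$. Then for all sufficiently large $n$ there is a map $i\colon G\to G\times\mathrm{Sym}(n)$ which is an isometric embedding for the word metrics of $(G,S)$ and $(G\times\mathrm{Sym}(n),S\boxtimes S_{\rm pos})$, such that $\kappa(i(g))>0$ for all $g\in G$ (curvature with respect to $S\boxtimes S_{\rm pos}$), and such that $d(i(gh),i(g)i(h))\le 2$ for all $g,h\in G$.
   Context: For generating sets $S_1,S_2$ of groups $G_1,G_2$, $S_1\boxtimes S_2=(S_1\times\{e\})\cup(\{e\}\times S_2)$ is the split generating set of $G_1\times G_2$. For a group with finite generating set $S$ ($S=S^{-1}$, $e\notin S$), $|x|$ is word length, $d(x,y)=|x^{-1}y|$, $\mathrm{Av}(g)=\frac{1}{|S|}\sum_{a\in S}|a^{-1}ga|$, and for $g\neq e$ the curvature is $\kappa(g)=\frac{|g|-\mathrm{Av}(g)}{|g|}$. *)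

theory Defs
  imports "HOL-Algebra.Algebra"
begin

definition gen_set :: "('a, 'b) monoid_scheme \<Rightarrow> 'a set \<Rightarrow> bool" where
  "gen_set G S \<longleftrightarrow> finite S \<and> S \<subseteq> carrier G \<and> \<one>\<^bsub>G\<^esub> \<notin> S
     \<and> (\<forall>s\<in>S. inv\<^bsub>G\<^esub> s \<in> S) \<and> generate G S = carrier G"

definition word_len :: "('a, 'b) monoid_scheme \<Rightarrow> 'a set \<Rightarrow> 'a \<Rightarrow> nat" where
  "word_len G S x = (LEAST k. \<exists>ws. length ws = k \<and> set ws \<subseteq> S
        \<and> foldr (\<otimes>\<^bsub>G\<^esub>) ws \<one>\<^bsub>G\<^esub> = x)"

definition word_dist :: "('a, 'b) monoid_scheme \<Rightarrow> 'a set \<Rightarrow> 'a \<Rightarrow> 'a \<Rightarrow> nat" where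
  "word_dist G S x y = word_len G S (inv\<^bsub>G\<^esub> x \<otimes>\<^bsub>G\<^esub> y)"

definition avg_conj :: "('a, 'b) monoid_scheme \<Rightarrow> 'a set \<Rightarrow> 'a \<Rightarrow> real" where
  "avg_conj G S g = (\<Sum>a\<in>S. real (word_len G S (inv\<^bsub>G\<^esub> a \<otimes>\<^bsub>G\<^esub> g \<otimes>\<^bsub>G\<^esub> a))) / real (card S)"

text \<open>Curvature; meaningful only for g \<noteq> 1 (for g = 1 the HOL value is 0 since x/0 = 0).\<close>
definition curvature :: "('a, 'b) monoid_scheme \<Rightarrow> 'a set \<Rightarrow> 'a \<Rightarrow> real" where
  "curvature G S g = (real (word_len G S g) - avg_conj G S g) / real (word_len G S g)"

definition split_gen :: "('a, 'c) monoid_scheme \<Rightarrow> 'a set \<Rightarrow> ('b, 'd) monoid_scheme \<Rightarrow> 'b set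
    \<Rightarrow> ('a \<times> 'b) set" where
  "split_gen G S H T = (S \<times> {\<one>\<^bsub>H\<^esub>}) \<union> ({\<one>\<^bsub>G\<^esub>} \<times> T)"

definition ncycle :: "nat \<Rightarrow> nat \<Rightarrow> nat" where
  "ncycle n = (\<lambda>i. if 1 \<le> i \<and> i < n then i + 1 else if i = n then 1 else i)"

definition S_pos :: "nat \<Rightarrow> (nat \<Rightarrow> nat) set" where
  "S_pos n = carrier (sym_group n) - {id, ncycle n, inv\<^bsub>sym_group n\<^esub> (ncycle n)}"

end

theory Submission
  imports Defs
begin

(* The embedding is g \<mapsto> (g, \<sigma>). For the split generating set, word length in a direct
   product is additive, |(x, p)| = |x|_S + |p|_{S_pos}, and |\<sigma>| = 2 because \<sigma> \<notin> S_pos while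
   \<sigma> = \<tau> (\<tau> \<sigma>) for the transposition \<tau> = (1 2). This gives the isometry and
   d(i(gh), i(g) i(h)) = |\<sigma>| = 2.
   For the curvature, conjugating i(g) by a generator (s, e) gives length at most |g| + 4, and
   conjugating by (e, a) gives |g| + |a\<^sup>-\<^sup>1 \<sigma> a|, which is |g| + 1 unless a\<^sup>-\<^sup>1 \<sigma> a \<in> {e, \<sigma>, \<sigma>\<^sup>-\<^sup>1}.
   Such an a commutes with \<sigma> or inverts it, hence is determined by a(1): there are at most 2n
   of them, each contributing at most |g| + 4. As |S_pos| \<ge> n! - 3 outgrows |S| and n, the
   average conjugate length drops below |g| + 2 = |i(g)|. *)

section \<open>Words over a generating set\<close>

definition word_prod :: "('a, 'b) monoid_scheme \<Rightarrow> 'a list \<Rightarrow> 'a" where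
  "word_prod G ws = foldr (\<otimes>\<^bsub>G\<^esub>) ws \<one>\<^bsub>G\<^esub>"

(* word_len G S x is meaningful only for x \<in> word_prods G S; elsewhere its LEAST is a junk value. *)
definition word_prods :: "('a, 'b) monoid_scheme \<Rightarrow> 'a set \<Rightarrow> 'a set" where
  "word_prods G S = word_prod G ` {ws. set ws \<subseteq> S}"

lemma word_prod_Nil [simp]: "word_prod G [] = \<one>\<^bsub>G\<^esub>"
  and word_prod_Cons [simp]: "word_prod G (x # xs) = x \<otimes>\<^bsub>G\<^esub> word_prod G xs"
  by (simp_all add: word_prod_def)

lemma word_prodsI: "set ws \<subseteq> S \<Longrightarrow> word_prod G ws \<in> word_prods G S"
  by (auto simp: word_prods_def)

lemma word_prodsE:
  assumes "x \<in> word_prods G S"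
  obtains ws where "set ws \<subseteq> S" "word_prod G ws = x"
  using assms by (auto simp: word_prods_def)

lemma word_len_le: "set ws \<subseteq> S \<Longrightarrow> word_len G S (word_prod G ws) \<le> length ws"
  unfolding word_len_def word_prod_def by (rule Least_le) auto

lemma word_len_witness:
  assumes "x \<in> word_prods G S"
  obtains ws where "set ws \<subseteq> S" "word_prod G ws = x" "length ws = word_len G S x"
proof -
  obtain vs where "set vs \<subseteq> S" "word_prod G vs = x"
    using assms by (rule word_prodsE)
  then have "\<exists>k ws. length ws = k \<and> set ws \<subseteq> S \<and> word_prod G ws = x"
    by blast
  then have "\<exists>ws. length ws = word_len G S x \<and> set ws \<subseteq> S \<and> word_prod G ws = x"
    unfolding word_len_def word_prod_def by (rule LeastI_ex)
  then show ?thesis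
    using that by blast
qed

lemma word_len_one [simp]: "word_len G S \<one>\<^bsub>G\<^esub> = 0"
  using word_len_le[of "[]" S G] by simp

context monoid
begin

lemma word_prod_closed: "set ws \<subseteq> carrier G \<Longrightarrow> word_prod G ws \<in> carrier G"
  by (induct ws) auto

lemma word_prod_append:
  "set ws \<subseteq> carrier G \<Longrightarrow> set vs \<subseteq> carrier G \<Longrightarrow>
    word_prod G (ws @ vs) = word_prod G ws \<otimes> word_prod G vs"
  by (induct ws) (auto simp: word_prod_closed m_assoc)

lemma word_prod_filter_one:
  "set xs \<subseteq> carrier G \<Longrightarrow> word_prod G (filter (\<lambda>x. x \<noteq> \<one>) xs) = word_prod G xs"
  by (induct xs) (auto simp: word_prod_closed)

lemma word_prod_ones [simp]: "word_prod G (map (\<lambda>_. \<one>) ys) = \<one>"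
  by (induct ys) auto

lemma word_prod_append_ones:
  "set xs \<subseteq> carrier G \<Longrightarrow> word_prod G (xs @ map (\<lambda>_. \<one>) ys) = word_prod G xs"
  by (subst word_prod_append) (auto simp: word_prod_closed)

lemma word_prod_ones_append:
  "set xs \<subseteq> carrier G \<Longrightarrow> word_prod G (map (\<lambda>_. \<one>) ys @ xs) = word_prod G xs"
  by (subst word_prod_append) (auto simp: word_prod_closed)

lemma one_in_word_prods: "\<one> \<in> word_prods G S"
  using word_prodsI[of "[]" S G] by simp

lemma gen_in_word_prods: "s \<in> S \<Longrightarrow> S \<subseteq> carrier G \<Longrightarrow> s \<in> word_prods G S"
  using word_prodsI[of "[s]" S G] by auto

lemma word_prods_mult:
  assumes "S \<subseteq> carrier G" "x \<in> word_prods G S" "y \<in> word_prods G S"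
  shows "x \<otimes> y \<in> word_prods G S"
proof -
  obtain ws vs where "set ws \<subseteq> S" "word_prod G ws = x" "set vs \<subseteq> S" "word_prod G vs = y"
    using assms(2,3) by (elim word_prodsE)
  then show ?thesis
    using assms(1) word_prodsI[of "ws @ vs" S G] by (auto simp: word_prod_append)
qed

lemma word_len_gen_le: "s \<in> S \<Longrightarrow> S \<subseteq> carrier G \<Longrightarrow> word_len G S s \<le> 1"
  using word_len_le[of "[s]" S G] by auto

lemma word_len_mult_le:
  assumes "S \<subseteq> carrier G" "x \<in> word_prods G S" "y \<in> word_prods G S"
  shows "word_len G S (x \<otimes> y) \<le> word_len G S x + word_len G S y"
proof -
  obtain ws vs where ws: "set ws \<subseteq> S" "word_prod G ws = x" "length ws = word_len G S x"
    and vs: "set vs \<subseteq> S" "word_prod G vs = y" "length vs = word_len G S y"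
    using assms(2,3) by (metis word_len_witness)
  then have "word_prod G (ws @ vs) = x \<otimes> y"
    using assms(1) by (auto simp: word_prod_append)
  then show ?thesis
    using word_len_le[of "ws @ vs" S G] ws vs by simp
qed

lemma word_len_le_one_imp:
  assumes "S \<subseteq> carrier G" "x \<in> word_prods G S" "word_len G S x \<le> 1"
  shows "x = \<one> \<or> x \<in> S"
proof -
  obtain ws where ws: "set ws \<subseteq> S" "word_prod G ws = x" "length ws \<le> 1"
    using assms(2,3) by (metis word_len_witness)
  then consider "ws = []" | s where "ws = [s]"
    by (cases ws) auto
  then show ?thesis
    by cases (use ws assms(1) in auto)
qed

end

context group
begin

lemma word_prods_eq_generate:
  assumes "S \<subseteq> carrier G" "\<forall>s\<in>S. inv s \<in> S"
  shows "word_prods G S = generate G S"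
proof
  show "generate G S \<subseteq> word_prods G S"
  proof
    fix x assume "x \<in> generate G S"
    then show "x \<in> word_prods G S"
      by induct (use assms in \<open>auto intro: one_in_word_prods gen_in_word_prods word_prods_mult\<close>)
  qed
  show "word_prods G S \<subseteq> generate G S"
  proof
    fix x assume "x \<in> word_prods G S"
    then obtain ws where "set ws \<subseteq> S" "word_prod G ws = x"
      by (rule word_prodsE)
    then show "x \<in> generate G S"
      by (induct ws arbitrary: x) (auto intro: generate.one generate.incl generate.eng)
  qed
qed

lemma word_len_conj_le:
  assumes "S \<subseteq> carrier G" "\<forall>s\<in>S. inv s \<in> S" "a \<in> S" "x \<in> word_prods G S"
  shows "word_len G S (inv a \<otimes> x \<otimes> a) \<le> word_len G S x + 2"
proof -
  have a_word: "a \<in> word_prods G S" and inv_a_word: "inv a \<in> word_prods G S"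
    using assms by (auto intro: gen_in_word_prods)
  have "word_len G S (inv a \<otimes> x \<otimes> a) \<le> word_len G S (inv a \<otimes> x) + word_len G S a"
    by (rule word_len_mult_le[OF assms(1) word_prods_mult[OF assms(1) inv_a_word assms(4)] a_word])
  also have "\<dots> \<le> word_len G S (inv a) + word_len G S x + word_len G S a"
    using word_len_mult_le[OF assms(1) inv_a_word assms(4)] by simp
  also have "\<dots> \<le> word_len G S x + 2"
    using assms word_len_gen_le[of a S] word_len_gen_le[of "inv a" S] by fastforce
  finally show ?thesis .
qed

lemma conj_eq_self_imp_commute:
  "a \<in> carrier G \<Longrightarrow> s \<in> carrier G \<Longrightarrow> inv a \<otimes> s \<otimes> a = s \<Longrightarrow> s \<otimes> a = a \<otimes> s"
  by (metis inv_solve_left' m_assoc m_closed inv_closed)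

lemma conj_eq_inv_imp:
  "a \<in> carrier G \<Longrightarrow> s \<in> carrier G \<Longrightarrow> inv a \<otimes> s \<otimes> a = inv s \<Longrightarrow> s \<otimes> a \<otimes> s = a"
  by (metis inv_solve_left' m_assoc m_closed inv_closed r_inv r_one)

lemma conj_eq_one_imp:
  "a \<in> carrier G \<Longrightarrow> s \<in> carrier G \<Longrightarrow> inv a \<otimes> s \<otimes> a = \<one> \<Longrightarrow> s = \<one>"
  by (metis inv_solve_left' m_assoc m_closed inv_closed r_inv r_one l_inv)

end

lemma curvature_pos:
  assumes "0 < word_len G S g"
    and "(\<Sum>a\<in>S. word_len G S (inv\<^bsub>G\<^esub> a \<otimes>\<^bsub>G\<^esub> g \<otimes>\<^bsub>G\<^esub> a)) < card S * word_len G S g"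
  shows "0 < curvature G S g"
proof -
  have "0 < card S"
    using assms(2) by (cases "card S") auto
  then have "avg_conj G S g < real (word_len G S g)"
    using assms(2) unfolding avg_conj_def
    by (simp add: divide_less_eq mult.commute flip: of_nat_sum of_nat_mult)
  then show ?thesis
    using assms(1) by (simp add: curvature_def)
qed

section \<open>Split generating sets of direct products\<close>

lemma word_prod_DirProd:
  assumes "monoid G" "monoid H" "set ws \<subseteq> carrier G \<times> carrier H"
  shows "word_prod (G \<times>\<times> H) ws = (word_prod G (map fst ws), word_prod H (map snd ws))"
  using assms(3)
  by (induct ws) (auto simp: monoid.word_prod_closed[OF assms(1)] monoid.word_prod_closed[OF assms(2)])

lemma length_filter_fst_snd_le:
  "\<forall>t\<in>set ws. fst t = a \<or> snd t = b \<Longrightarrow>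
    length (filter (\<lambda>x. x \<noteq> a) (map fst ws)) + length (filter (\<lambda>y. y \<noteq> b) (map snd ws)) \<le> length ws"
  by (induct ws) auto

lemma word_len_DirProd:
  assumes "monoid G" "monoid H" "S \<subseteq> carrier G" "U \<subseteq> carrier H"
    and "x \<in> word_prods G S" "p \<in> word_prods H U"
  shows "word_len (G \<times>\<times> H) (split_gen G S H U) (x, p) = word_len G S x + word_len H U p"
proof -
  interpret G: monoid G by fact
  interpret H: monoid H by fact
  let ?T = "split_gen G S H U"
  have T_carrier: "?T \<subseteq> carrier G \<times> carrier H"
    using assms(3,4) by (auto simp: split_gen_def)
  obtain xs where xs: "set xs \<subseteq> S" "word_prod G xs = x" "length xs = word_len G S x"
    using assms(5) by (rule word_len_witness)
  obtain ps where ps: "set ps \<subseteq> U" "word_prod H ps = p" "length ps = word_len H U p"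
    using assms(6) by (rule word_len_witness)
  define w where "w = map (\<lambda>s. (s, \<one>\<^bsub>H\<^esub>)) xs @ map (\<lambda>u. (\<one>\<^bsub>G\<^esub>, u)) ps"
  have w_gen: "set w \<subseteq> ?T"
    using xs(1) ps(1) by (auto simp: w_def split_gen_def)
  have "map snd w = map (\<lambda>_. \<one>\<^bsub>H\<^esub>) xs @ ps"
    by (simp add: w_def comp_def)
  then have "word_prod H (map snd w) = p"
    using ps assms(4) by (simp add: H.word_prod_ones_append)
  moreover have "word_prod G (map fst w) = x"
    using xs assms(3) by (simp add: w_def comp_def G.word_prod_append_ones)
  ultimately have w_prod: "word_prod (G \<times>\<times> H) w = (x, p)"
    using word_prod_DirProd[OF assms(1,2)] w_gen T_carrier by auto
  show ?thesis
  proof (rule antisym)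
    show "word_len (G \<times>\<times> H) ?T (x, p) \<le> word_len G S x + word_len H U p"
      using word_len_le[OF w_gen, of "G \<times>\<times> H"] w_prod xs(3) ps(3) by (simp add: w_def)
  next
    obtain ws where ws: "set ws \<subseteq> ?T" "word_prod (G \<times>\<times> H) ws = (x, p)"
      "length ws = word_len (G \<times>\<times> H) ?T (x, p)"
      using word_prodsI[OF w_gen] w_prod by (metis word_len_witness)
    \<comment> \<open>every letter of ws is trivial in one coordinate, so the two projections,
      stripped of trivial letters, share out the letters of ws\<close>
    define xs' where "xs' = filter (\<lambda>x. x \<noteq> \<one>\<^bsub>G\<^esub>) (map fst ws)"
    define ps' where "ps' = filter (\<lambda>y. y \<noteq> \<one>\<^bsub>H\<^esub>) (map snd ws)"
    have "set xs' \<subseteq> S" "set ps' \<subseteq> U"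
      using ws(1) by (auto simp: xs'_def ps'_def split_gen_def)
    moreover have "word_prod G xs' = x" "word_prod H ps' = p"
    proof -
      have ws_carrier: "set ws \<subseteq> carrier G \<times> carrier H"
        using ws(1) T_carrier by blast
      then have "set (map fst ws) \<subseteq> carrier G" "set (map snd ws) \<subseteq> carrier H"
        by auto
      then show "word_prod G xs' = x" "word_prod H ps' = p"
        using ws(2) word_prod_DirProd[OF assms(1,2) ws_carrier]
        by (simp_all add: xs'_def ps'_def G.word_prod_filter_one H.word_prod_filter_one)
    qed
    moreover have "length xs' + length ps' \<le> length ws"
      unfolding xs'_def ps'_def
      by (rule length_filter_fst_snd_le) (use ws(1) in \<open>auto simp: split_gen_def\<close>)
    ultimately show "word_len G S x + word_len H U p \<le> word_len (G \<times>\<times> H) ?T (x, p)"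
      using word_len_le[of xs' S G] word_len_le[of ps' U H] ws(3) by fastforce
  qed
qed

lemma sum_split_gen:
  assumes "finite S" "finite U" "\<one>\<^bsub>H\<^esub> \<notin> U"
  shows "sum f (split_gen G S H U) = (\<Sum>s\<in>S. f (s, \<one>\<^bsub>H\<^esub>)) + (\<Sum>u\<in>U. f (\<one>\<^bsub>G\<^esub>, u))"
proof -
  have "split_gen G S H U = (\<lambda>s. (s, \<one>\<^bsub>H\<^esub>)) ` S \<union> (\<lambda>u. (\<one>\<^bsub>G\<^esub>, u)) ` U"
    by (auto simp: split_gen_def)
  moreover have "(\<lambda>s. (s, \<one>\<^bsub>H\<^esub>)) ` S \<inter> (\<lambda>u. (\<one>\<^bsub>G\<^esub>, u)) ` U = {}"
    using assms(3) by auto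
  ultimately show ?thesis
    using assms(1,2) by (simp add: sum.union_disjoint sum.reindex inj_on_def)
qed

lemma card_split_gen:
  "finite S \<Longrightarrow> finite U \<Longrightarrow> \<one>\<^bsub>H\<^esub> \<notin> U \<Longrightarrow> card (split_gen G S H U) = card S + card U"
  using sum_split_gen[of S U H "\<lambda>_. 1::nat" G] by simp

section \<open>The n-cycle and the generating set S_pos n\<close>

lemma ncycle_Suc: "1 \<le> j \<Longrightarrow> j < n \<Longrightarrow> ncycle n j = Suc j"
  by (simp add: ncycle_def)

lemma ncycle_permutes: "1 \<le> n \<Longrightarrow> ncycle n permutes {1..n}"
proof (rule bij_imp_permutes)
  assume "1 \<le> n"
  have "inj_on (ncycle n) {1..n}" "ncycle n ` {1..n} \<subseteq> {1..n}"
    unfolding inj_on_def ncycle_def by auto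
  then show "bij_betw (ncycle n) {1..n} {1..n}"
    by (simp add: bij_betw_def endo_inj_surj)
  show "ncycle n x = x" if "x \<notin> {1..n}" for x
    using that \<open>1 \<le> n\<close> by (auto simp: ncycle_def)
qed

lemma ncycle_in_carrier: "1 \<le> n \<Longrightarrow> ncycle n \<in> carrier (sym_group n)"
  unfolding sym_group_carrier by (rule ncycle_permutes)

lemma ncycle_ne_id: "2 \<le> n \<Longrightarrow> ncycle n \<noteq> id"
  using ncycle_Suc[of 1 n] by (metis id_apply n_not_Suc_n One_nat_def Suc_1 Suc_le_lessD le_refl)

lemma permutes_eq_if_same_successor_rule:
  assumes "a permutes {1..n}" "b permutes {1..n}" "a 1 = b 1"
    and "\<And>j. 1 \<le> j \<Longrightarrow> j < n \<Longrightarrow> a (Suc j) = f (a j)"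
    and "\<And>j. 1 \<le> j \<Longrightarrow> j < n \<Longrightarrow> b (Suc j) = f (b j)"
  shows "a = b"
proof
  fix x
  have "a j = b j" if "1 \<le> j" "j \<le> n" for j
    using that
  proof (induct j)
    case (Suc j)
    then show ?case
      using assms(3) assms(4,5)[of j] by (cases "j = 0") auto
  qed simp
  then show "a x = b x"
    using assms(1,2) by (cases "x \<in> {1..n}") (auto simp: permutes_not_in)
qed

lemma card_sym_group_successor_rule_le:
  assumes "1 \<le> n"
    and "\<And>a j. a \<in> carrier (sym_group n) \<Longrightarrow> P a \<Longrightarrow> 1 \<le> j \<Longrightarrow> j < n \<Longrightarrow> a (Suc j) = f (a j)"
  shows "card {a \<in> carrier (sym_group n). P a} \<le> n"
proof -
  let ?A = "{a \<in> carrier (sym_group n). P a}"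
  have "inj_on (\<lambda>a. a 1) ?A"
    using assms(2) by (intro inj_onI permutes_eq_if_same_successor_rule[where f = f])
      (auto simp: sym_group_carrier)
  moreover have "(\<lambda>a. a 1) ` ?A \<subseteq> {1..n}"
    using assms(1) permutes_in_image by (fastforce simp: sym_group_carrier)
  ultimately show ?thesis
    using card_inj_on_le[of "\<lambda>a. a 1" ?A "{1..n}"] by simp
qed

lemma card_centralizer_ncycle_le:
  "1 \<le> n \<Longrightarrow> card {a \<in> carrier (sym_group n). ncycle n \<circ> a = a \<circ> ncycle n} \<le> n"
  by (rule card_sym_group_successor_rule_le[where f = "ncycle n"])
    (auto simp: fun_eq_iff ncycle_Suc dest: spec)

lemma card_ncycle_inverting_le:
  assumes "1 \<le> n"
  shows "card {a \<in> carrier (sym_group n). ncycle n \<circ> a \<circ> ncycle n = a} \<le> n"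
proof (rule card_sym_group_successor_rule_le[OF assms, where f = "inv' (ncycle n)"])
  have "inj (ncycle n)"
    using permutes_inj[OF ncycle_permutes[OF assms]] .
  then show "a (Suc j) = inv' (ncycle n) (a j)"
    if "ncycle n \<circ> a \<circ> ncycle n = a" "1 \<le> j" "j < n" for a j
    using that ncycle_Suc[of j n] by (metis comp_apply inv_f_f)
qed

lemma S_pos_subset_carrier: "S_pos n \<subseteq> carrier (sym_group n)"
  by (auto simp: S_pos_def)

lemma id_notin_S_pos: "id \<notin> S_pos n"
  by (simp add: S_pos_def)

lemma inv_in_S_pos:
  assumes "1 \<le> n" "a \<in> S_pos n"
  shows "inv\<^bsub>sym_group n\<^esub> a \<in> S_pos n"
proof -
  let ?H = "sym_group n"
  interpret H: group ?H by (rule sym_group_is_group)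
  have "a \<in> carrier ?H - {\<one>\<^bsub>?H\<^esub>, ncycle n, inv\<^bsub>?H\<^esub> ncycle n}"
    using assms(2) by (simp add: S_pos_def sym_group_one del: sym_group_inv_equality)
  then have "inv\<^bsub>?H\<^esub> a \<in> carrier ?H - {\<one>\<^bsub>?H\<^esub>, ncycle n, inv\<^bsub>?H\<^esub> ncycle n}"
    using ncycle_in_carrier[OF assms(1)]
    by (auto simp del: sym_group_inv_equality) (metis H.inv_inv)
  then show ?thesis
    by (simp add: S_pos_def sym_group_one del: sym_group_inv_equality)
qed

lemma finite_S_pos: "finite (S_pos n)"
  by (simp add: S_pos_def sym_group_def finite_permutations)

lemma card_S_pos_ge: "fact n - 3 \<le> card (S_pos n)"
proof -
  have "card (carrier (sym_group n)) - card {id, ncycle n, inv\<^bsub>sym_group n\<^esub> (ncycle n)}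
      \<le> card (S_pos n)"
    unfolding S_pos_def by (rule diff_card_le_card_Diff) simp
  moreover have "card {id, ncycle n, inv\<^bsub>sym_group n\<^esub> (ncycle n)} \<le> 3"
    using card_length[of "[id, ncycle n, inv\<^bsub>sym_group n\<^esub> (ncycle n)]"] by simp
  ultimately show ?thesis
    by (simp add: sym_group_card_carrier)
qed

lemma transpose_factors_in_S_pos:
  assumes "3 \<le> n"
  shows "Transposition.transpose 1 2 \<in> S_pos n" "Transposition.transpose 1 2 \<circ> ncycle n \<in> S_pos n"
proof -
  let ?H = "sym_group n" and ?\<sigma> = "ncycle n" and ?\<tau> = "Transposition.transpose (1::nat) 2"
  interpret H: group ?H by (rule sym_group_is_group)
  have \<sigma>: "?\<sigma> \<in> carrier ?H"
    using assms by (intro ncycle_in_carrier) simp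
  have \<sigma>12: "?\<sigma> 1 = 2" "?\<sigma> 2 = 3"
    using assms ncycle_Suc[of 1 n] ncycle_Suc[of 2 n] by auto
  have \<tau>: "?\<tau> \<in> carrier ?H"
    unfolding sym_group_carrier using assms by (intro permutes_swap_id) auto
  then have \<tau>\<sigma>: "?\<tau> \<circ> ?\<sigma> \<in> carrier ?H"
    using H.m_closed[OF _ \<sigma>] by (simp add: sym_group_mult)
  have ne_inv: "x \<noteq> inv\<^bsub>?H\<^esub> ?\<sigma>" if "?\<sigma> (x 1) \<noteq> 1" for x
  proof
    assume "x = inv\<^bsub>?H\<^esub> ?\<sigma>"
    then have "?\<sigma> \<circ> x = id"
      using H.r_inv[OF \<sigma>] by (simp add: sym_group_mult sym_group_one del: sym_group_inv_equality)
    then show False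
      using that by (metis comp_apply id_apply)
  qed
  have fun_ne: "f \<noteq> g" if "f k \<noteq> g k" for f g :: "nat \<Rightarrow> nat" and k
    using that by auto
  have "?\<tau> \<noteq> id" by (rule fun_ne[of _ 1]) simp
  moreover have "?\<tau> \<noteq> ?\<sigma>" by (rule fun_ne[of _ 2]) (use \<sigma>12 in simp)
  moreover have "?\<tau> \<noteq> inv\<^bsub>?H\<^esub> ?\<sigma>" by (rule ne_inv) (use \<sigma>12 in simp)
  ultimately show "?\<tau> \<in> S_pos n"
    using \<tau> by (simp add: S_pos_def del: sym_group_inv_equality)
  have "?\<tau> \<circ> ?\<sigma> \<noteq> id" by (rule fun_ne[of _ 2]) (use \<sigma>12 in simp)
  moreover have "?\<tau> \<circ> ?\<sigma> \<noteq> ?\<sigma>" by (rule fun_ne[of _ 1]) (use \<sigma>12 in simp)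
  moreover have "?\<tau> \<circ> ?\<sigma> \<noteq> inv\<^bsub>?H\<^esub> ?\<sigma>" by (rule ne_inv) (use \<sigma>12 in simp)
  ultimately show "?\<tau> \<circ> ?\<sigma> \<in> S_pos n"
    using \<tau>\<sigma> by (simp add: S_pos_def del: sym_group_inv_equality)
qed

lemma ncycle_word:
  assumes "3 \<le> n"
  defines "ws \<equiv> [Transposition.transpose 1 2, Transposition.transpose 1 2 \<circ> ncycle n]"
  shows "set ws \<subseteq> S_pos n" and "word_prod (sym_group n) ws = ncycle n"
  using transpose_factors_in_S_pos[OF assms(1)]
  by (auto simp: ws_def sym_group_mult sym_group_one comp_assoc[symmetric])

lemma ncycle_in_word_prods: "3 \<le> n \<Longrightarrow> ncycle n \<in> word_prods (sym_group n) (S_pos n)"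
  using word_prodsI[OF ncycle_word(1)] ncycle_word(2) by metis

lemma word_len_ncycle:
  assumes "3 \<le> n"
  shows "word_len (sym_group n) (S_pos n) (ncycle n) = 2"
proof (rule antisym)
  show "word_len (sym_group n) (S_pos n) (ncycle n) \<le> 2"
    using word_len_le[OF ncycle_word(1)[OF assms], where G = "sym_group n"] ncycle_word(2)[OF assms]
    by simp
  have "ncycle n \<noteq> \<one>\<^bsub>sym_group n\<^esub>" "ncycle n \<notin> S_pos n"
    using ncycle_ne_id assms by (auto simp: sym_group_one S_pos_def)
  then show "2 \<le> word_len (sym_group n) (S_pos n) (ncycle n)"
    using monoid.word_len_le_one_imp[OF group.is_monoid[OF sym_group_is_group] S_pos_subset_carrier
        ncycle_in_word_prods[OF assms]]
    by fastforce
qed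

lemma word_prods_S_pos:
  assumes "3 \<le> n"
  shows "word_prods (sym_group n) (S_pos n) = carrier (sym_group n)"
proof -
  let ?H = "sym_group n"
  interpret H: group ?H by (rule sym_group_is_group)
  have gen: "word_prods ?H (S_pos n) = generate ?H (S_pos n)"
    using S_pos_subset_carrier inv_in_S_pos assms by (intro H.word_prods_eq_generate) auto
  have \<sigma>: "ncycle n \<in> generate ?H (S_pos n)"
    using ncycle_in_word_prods[OF assms] gen by simp
  have "x \<in> generate ?H (S_pos n)" if "x \<in> carrier ?H" for x
  proof -
    have "x \<in> S_pos n \<or> x = \<one>\<^bsub>?H\<^esub> \<or> x = ncycle n \<or> x = inv\<^bsub>?H\<^esub> ncycle n"
      using that by (auto simp: S_pos_def sym_group_one simp del: sym_group_inv_equality)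
    then show ?thesis
      using \<sigma> subgroup.m_inv_closed[OF H.generate_is_subgroup[OF S_pos_subset_carrier] \<sigma>]
      by (auto intro: generate.incl generate.one)
  qed
  then show ?thesis
    using gen H.generate_incl[OF S_pos_subset_carrier] by auto
qed

lemma card_conj_ncycle_notin_S_pos_le:
  assumes "3 \<le> n"
  shows "card {a \<in> carrier (sym_group n).
      inv\<^bsub>sym_group n\<^esub> a \<otimes>\<^bsub>sym_group n\<^esub> ncycle n \<otimes>\<^bsub>sym_group n\<^esub> a \<notin> S_pos n} \<le> 2 * n"
    (is "card ?B \<le> _")
proof -
  let ?H = "sym_group n" and ?\<sigma> = "ncycle n"
  interpret H: group ?H by (rule sym_group_is_group)
  have \<sigma>: "?\<sigma> \<in> carrier ?H" "?\<sigma> \<noteq> \<one>\<^bsub>?H\<^esub>"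
    using assms ncycle_in_carrier ncycle_ne_id by (auto simp: sym_group_one)
  let ?C1 = "{a \<in> carrier ?H. ?\<sigma> \<circ> a = a \<circ> ?\<sigma>}" and ?C2 = "{a \<in> carrier ?H. ?\<sigma> \<circ> a \<circ> ?\<sigma> = a}"
  have "?B \<subseteq> ?C1 \<union> ?C2"
  proof
    fix a assume a: "a \<in> ?B"
    then have "a \<in> carrier ?H" by simp
    moreover have "inv\<^bsub>?H\<^esub> a \<otimes>\<^bsub>?H\<^esub> ?\<sigma> \<otimes>\<^bsub>?H\<^esub> a \<in> {\<one>\<^bsub>?H\<^esub>, ?\<sigma>, inv\<^bsub>?H\<^esub> ?\<sigma>}"
      using a \<sigma> by (auto simp: S_pos_def sym_group_one simp del: sym_group_inv_equality)
    ultimately show "a \<in> ?C1 \<union> ?C2"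
      using H.conj_eq_one_imp H.conj_eq_self_imp_commute H.conj_eq_inv_imp \<sigma>
      by (auto simp: sym_group_mult simp del: sym_group_inv_equality)
  qed
  then have "card ?B \<le> card (?C1 \<union> ?C2)"
    by (intro card_mono) (auto simp: sym_group_def finite_permutations)
  also have "\<dots> \<le> card ?C1 + card ?C2"
    by (rule card_Un_le)
  also have "\<dots> \<le> 2 * n"
    using card_centralizer_ncycle_le[of n] card_ncycle_inverting_le[of n] assms by simp
  finally show ?thesis .
qed

lemma sum_word_len_conj_ncycle_le:
  assumes "3 \<le> n"
  shows "(\<Sum>a\<in>S_pos n. word_len (sym_group n) (S_pos n)
            (inv\<^bsub>sym_group n\<^esub> a \<otimes>\<^bsub>sym_group n\<^esub> ncycle n \<otimes>\<^bsub>sym_group n\<^esub> a))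
    \<le> card (S_pos n) + 6 * n"
proof -
  let ?H = "sym_group n" and ?U = "S_pos n"
  let ?c = "\<lambda>a. inv\<^bsub>?H\<^esub> a \<otimes>\<^bsub>?H\<^esub> ncycle n \<otimes>\<^bsub>?H\<^esub> a"
  let ?B = "{a \<in> carrier ?H. ?c a \<notin> ?U}"
  interpret H: group ?H by (rule sym_group_is_group)
  have "word_len ?H ?U (?c a) \<le> 1 + (if a \<in> ?B then 3 else 0)" if a: "a \<in> ?U" for a
  proof (cases "?c a \<in> ?U")
    case True
    then show ?thesis
      using H.word_len_gen_le[OF _ S_pos_subset_carrier] by simp
  next
    case False
    have "word_len ?H ?U (?c a) \<le> word_len ?H ?U (ncycle n) + 2"
      using a inv_in_S_pos ncycle_in_word_prods assms
      by (intro H.word_len_conj_le[OF S_pos_subset_carrier]) (auto simp del: sym_group_inv_equality)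
    then show ?thesis
      using False a S_pos_subset_carrier word_len_ncycle[OF assms] by auto
  qed
  then have "(\<Sum>a\<in>?U. word_len ?H ?U (?c a)) \<le> (\<Sum>a\<in>?U. 1 + (if a \<in> ?B then 3 else 0))"
    by (rule sum_mono)
  also have "\<dots> = card ?U + (\<Sum>a\<in>?U. if a \<in> ?B then 3 else 0)"
    by (subst sum.distrib) simp
  also have "\<dots> = card ?U + 3 * card (?U \<inter> ?B)"
    using sum.inter_restrict[OF finite_S_pos[of n], where g = "\<lambda>_. 3::nat" and B = ?B] by simp
  also have "\<dots> \<le> card ?U + 3 * card ?B"
    by (simp add: card_mono sym_group_def finite_permutations)
  also have "\<dots> \<le> card ?U + 6 * n"
    using card_conj_ncycle_notin_S_pos_le[OF assms] by simp
  finally show ?thesis .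
qed

section \<open>The embedding g \<mapsto> (g, ncycle n)\<close>

locale sym_extension = group G for G :: "('a, 'b) monoid_scheme" (structure) +
  fixes S :: "'a set" and n :: nat
  assumes gen_set: "gen_set G S" and three_le_n: "3 \<le> n"
begin

abbreviation "Gn \<equiv> G \<times>\<times> sym_group n"
abbreviation "Tn \<equiv> split_gen G S (sym_group n) (S_pos n)"

lemma S_subset_carrier: "S \<subseteq> carrier G"
  and inv_in_S: "s \<in> S \<Longrightarrow> inv s \<in> S"
  and finite_S: "finite S"
  using gen_set by (auto simp: gen_set_def)

lemma word_prods_S: "word_prods G S = carrier G"
  using word_prods_eq_generate[OF S_subset_carrier] inv_in_S gen_set by (simp add: gen_set_def)

lemma ncycle_closed: "ncycle n \<in> carrier (sym_group n)"
  using three_le_n by (intro ncycle_in_carrier) simp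

lemma word_len_pair:
  assumes "x \<in> carrier G" "p \<in> carrier (sym_group n)"
  shows "word_len Gn Tn (x, p) = word_len G S x + word_len (sym_group n) (S_pos n) p"
  using assms word_prods_S word_prods_S_pos[OF three_le_n]
  by (intro word_len_DirProd group.is_monoid sym_group_is_group S_subset_carrier S_pos_subset_carrier)
    (auto intro: is_group)

lemma inv_pair:
  "x \<in> carrier G \<Longrightarrow> p \<in> carrier (sym_group n) \<Longrightarrow>
    inv\<^bsub>Gn\<^esub> (x, p) = (inv x, inv\<^bsub>sym_group n\<^esub> p)"
  by (rule inv_DirProd[OF is_group sym_group_is_group])

lemma word_dist_embed:
  assumes "g \<in> carrier G" "h \<in> carrier G"
  shows "word_dist Gn Tn (g, ncycle n) (h, ncycle n) = word_dist G S g h"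
proof -
  interpret H: group "sym_group n" by (rule sym_group_is_group)
  have "inv\<^bsub>Gn\<^esub> (g, ncycle n) \<otimes>\<^bsub>Gn\<^esub> (h, ncycle n) = (inv g \<otimes> h, \<one>\<^bsub>sym_group n\<^esub>)"
    using assms ncycle_closed by (simp add: inv_pair del: sym_group_inv_equality)
  then show ?thesis
    using assms word_len_pair[of "inv g \<otimes> h" "\<one>\<^bsub>sym_group n\<^esub>"] by (simp add: word_dist_def)
qed

lemma word_dist_embed_mult:
  assumes "g \<in> carrier G" "h \<in> carrier G"
  shows "word_dist Gn Tn (g \<otimes> h, ncycle n) ((g, ncycle n) \<otimes>\<^bsub>Gn\<^esub> (h, ncycle n)) = 2"
proof -
  interpret H: group "sym_group n" by (rule sym_group_is_group)
  have "inv\<^bsub>Gn\<^esub> (g \<otimes> h, ncycle n) \<otimes>\<^bsub>Gn\<^esub> ((g, ncycle n) \<otimes>\<^bsub>Gn\<^esub> (h, ncycle n)) = (\<one>, ncycle n)"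
    using assms ncycle_closed
    by (simp add: inv_pair H.m_assoc[symmetric] del: sym_group_inv_equality)
  then show ?thesis
    using word_len_pair[of \<one> "ncycle n"] ncycle_closed word_len_ncycle[OF three_le_n]
    by (simp add: word_dist_def)
qed

lemma sum_word_len_conj_embed_le:
  assumes "g \<in> carrier G"
  shows "(\<Sum>t\<in>Tn. word_len Gn Tn (inv\<^bsub>Gn\<^esub> t \<otimes>\<^bsub>Gn\<^esub> (g, ncycle n) \<otimes>\<^bsub>Gn\<^esub> t))
    \<le> card S * (word_len G S g + 4) + card (S_pos n) * (word_len G S g + 1) + 6 * n"
proof -
  let ?H = "sym_group n" and ?U = "S_pos n" and ?L = "word_len G S g"
  let ?f = "\<lambda>t. word_len Gn Tn (inv\<^bsub>Gn\<^esub> t \<otimes>\<^bsub>Gn\<^esub> (g, ncycle n) \<otimes>\<^bsub>Gn\<^esub> t)"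
  interpret H: group ?H by (rule sym_group_is_group)
  have "?f (s, \<one>\<^bsub>?H\<^esub>) \<le> ?L + 4" if s: "s \<in> S" for s
  proof -
    have "s \<in> carrier G"
      using s S_subset_carrier by auto
    then have "?f (s, \<one>\<^bsub>?H\<^esub>) = word_len G S (inv s \<otimes> g \<otimes> s) + 2"
      using assms ncycle_closed word_len_pair word_len_ncycle[OF three_le_n]
      by (simp add: inv_pair del: sym_group_inv_equality)
    also have "\<dots> \<le> ?L + 4"
      using word_len_conj_le[OF S_subset_carrier _ s] inv_in_S assms word_prods_S by auto
    finally show ?thesis .
  qed
  then have "(\<Sum>s\<in>S. ?f (s, \<one>\<^bsub>?H\<^esub>)) \<le> card S * (?L + 4)"
    using sum_bounded_above[of S "\<lambda>s. ?f (s, \<one>\<^bsub>?H\<^esub>)" "?L + 4"] by simp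
  moreover have "?f (\<one>, a) = ?L + word_len ?H ?U (inv\<^bsub>?H\<^esub> a \<otimes>\<^bsub>?H\<^esub> ncycle n \<otimes>\<^bsub>?H\<^esub> a)"
    if "a \<in> ?U" for a
  proof -
    have a: "a \<in> carrier ?H"
      using that S_pos_subset_carrier by auto
    then have "inv\<^bsub>Gn\<^esub> (\<one>, a) \<otimes>\<^bsub>Gn\<^esub> (g, ncycle n) \<otimes>\<^bsub>Gn\<^esub> (\<one>, a)
        = (g, inv\<^bsub>?H\<^esub> a \<otimes>\<^bsub>?H\<^esub> ncycle n \<otimes>\<^bsub>?H\<^esub> a)"
      using assms by (simp add: inv_pair del: sym_group_inv_equality)
    then show ?thesis
      using a assms ncycle_closed word_len_pair by (simp del: sym_group_inv_equality)
  qed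
  then have "(\<Sum>a\<in>?U. ?f (\<one>, a)) \<le> card ?U * (?L + 1) + 6 * n"
    using sum_word_len_conj_ncycle_le[OF three_le_n] by (simp add: sum.distrib algebra_simps)
  ultimately show ?thesis
    using sum_split_gen[OF finite_S finite_S_pos[of n], where H = ?H and f = ?f and G = G]
    by (simp add: sym_group_one id_notin_S_pos)
qed

lemma curvature_embed_pos:
  assumes "2 * card S + 10 \<le> n" "g \<in> carrier G"
  shows "0 < curvature Gn Tn (g, ncycle n)"
proof (rule curvature_pos)
  let ?L = "word_len G S g" and ?k = "card S" and ?m = "card (S_pos n)"
  have len: "word_len Gn Tn (g, ncycle n) = ?L + 2"
    using assms(2) ncycle_closed word_len_pair word_len_ncycle[OF three_le_n] by simp
  then show "0 < word_len Gn Tn (g, ncycle n)"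
    by simp
  have "9 * n \<le> (n - 1) * n"
    using mult_le_mono1[of 9 "n - 1" n] assms(1) by simp
  also have "\<dots> \<le> fact (n - 1) * n"
    using fact_ge_self[of "n - 1"] by simp
  also have "\<dots> = fact n"
    using fact_reduce[of n, where 'a = nat] assms(1) by simp
  finally have "2 * ?k + 6 * n < ?m"
    using card_S_pos_ge[of n] assms(1) by linarith
  then have "?k * (?L + 4) + ?m * (?L + 1) + 6 * n < (?k + ?m) * (?L + 2)"
    by (simp add: algebra_simps)
  then show "(\<Sum>t\<in>Tn. word_len Gn Tn (inv\<^bsub>Gn\<^esub> t \<otimes>\<^bsub>Gn\<^esub> (g, ncycle n) \<otimes>\<^bsub>Gn\<^esub> t))
      < card Tn * word_len Gn Tn (g, ncycle n)"
    using sum_word_len_conj_embed_le[OF assms(2)] len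
      card_split_gen[OF finite_S finite_S_pos[of n], where H = "sym_group n" and G = G]
    by (simp add: sym_group_one id_notin_S_pos)
qed

end

theorem mainTheorem10:
  fixes G :: "'a monoid" and S :: "'a set"
  assumes "group G" and "gen_set G S"
  shows "\<exists>N. \<forall>n\<ge>N. \<exists>i. (\<forall>g\<in>carrier G. i g \<in> carrier (G \<times>\<times> sym_group n))
      \<and> (\<forall>g\<in>carrier G. \<forall>h\<in>carrier G.
            word_dist (G \<times>\<times> sym_group n) (split_gen G S (sym_group n) (S_pos n)) (i g) (i h)
              = word_dist G S g h)
      \<and> (\<forall>g\<in>carrier G. i g \<noteq> \<one>\<^bsub>G \<times>\<times> sym_group n\<^esub>
            \<and> curvature (G \<times>\<times> sym_group n) (split_gen G S (sym_group n) (S_pos n)) (i g) > 0)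
      \<and> (\<forall>g\<in>carrier G. \<forall>h\<in>carrier G.
            word_dist (G \<times>\<times> sym_group n) (split_gen G S (sym_group n) (S_pos n))
               (i (g \<otimes>\<^bsub>G\<^esub> h)) (i g \<otimes>\<^bsub>G \<times>\<times> sym_group n\<^esub> i h) \<le> 2)"
proof (intro exI[of _ "2 * card S + 10"] allI impI)
  fix n :: nat
  assume n: "2 * card S + 10 \<le> n"
  interpret sym_extension G S n
    using assms n by (intro sym_extension.intro sym_extension_axioms.intro) auto
  have "ncycle n \<noteq> \<one>\<^bsub>sym_group n\<^esub>"
    using ncycle_ne_id n by (simp add: sym_group_one)
  then show "\<exists>i. (\<forall>g\<in>carrier G. i g \<in> carrier Gn)
      \<and> (\<forall>g\<in>carrier G. \<forall>h\<in>carrier G. word_dist Gn Tn (i g) (i h) = word_dist G S g h)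
      \<and> (\<forall>g\<in>carrier G. i g \<noteq> \<one>\<^bsub>Gn\<^esub> \<and> curvature Gn Tn (i g) > 0)
      \<and> (\<forall>g\<in>carrier G. \<forall>h\<in>carrier G. word_dist Gn Tn (i (g \<otimes>\<^bsub>G\<^esub> h)) (i g \<otimes>\<^bsub>Gn\<^esub> i h) \<le> 2)"
    using ncycle_closed word_dist_embed word_dist_embed_mult curvature_embed_pos[OF n]
    by (intro exI[of _ "\<lambda>g. (g, ncycle n)"]) auto
qed

end
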